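(* Let $s\ge0$. There is $C=C(s)$, independent of $M>0$ and $T>0$, such that for all $\omega,\tilde\omega\in C([0,T];\ell^2_s(\mathbb Z))$, $$\|\mathcal N_R[\omega]\|_{C_T\ell^2_s}\le CM\|\omega\|_{C_T\ell^2_s}^3,\qquad \|\mathcal N_R[\omega]-\mathcal N_R[\tilde\omega]\|_{C_T\ell^2_s}\le CM\big(\|\omega\|_{C_T\ell^2_s}^2+\|\tilde\omega\|_{C_T\ell^2_s}^2\big)\|\omega-\tilde\omega\|_{C_T\ell^2_s}.$$
   Context: $\langle n\rangle=(1+n^2)^{1/2}$, $\|\omega\|_{\ell^2_s}=\|\langle\cdot\rangle^s\omega\|_{\ell^2}$, $C_T\ell^2_s:=C([0,T];\ell^2_s(\mathbb Z))$ with norm $\sup_{t\in[0,T]}\|\omega(t)\|_{\ell^2_s}$, $\omega^*(n):=\overline{\omega(-n)}$. Notation $n_{ij\ldots}=n_i+n_j+\cdots$, $\hat n:=n-i\mathbf 1_{\{n=0\}}$; for $n=n_{123}$: $m_1:=2i\frac{nn_{23}}{\hat n_1\hat n_2}\mathbf 1_{\{n>0\}}\mathbf 1_{\{n_{23}<0\}}\mathbf 1_{\{n_3\ne0\}}$, $\tilde m_1:=m_1\mathbf 1_{\{n_{12}n_{13}\ne0\}}$, $\Phi:=n|n|-n_1|n_1|-n_2|n_2|-n_3|n_3|$. For $M>0$, $t\in[0,T]$: $$\mathcal N_R[\omega](t,n):=\sum_{n=n_{123},\ |\Phi|\le M}e^{it\Phi}\tilde m_1(n,n_1,n_2,n_3)\,\omega(t,n_1)\omega(t,n_2)\omega^*(t,n_3)\quad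 (n>0),$$ and $\mathcal N_R[\omega](t,n):=0$ for $n\le0$. *)

theory Defs
  imports "HOL-Analysis.Analysis"
begin

definition jbr :: "int \<Rightarrow> real" where
  "jbr n = sqrt (1 + (real_of_int n)^2)"

definition in_l2s :: "real \<Rightarrow> (int \<Rightarrow> complex) \<Rightarrow> bool" where
  "in_l2s s f \<longleftrightarrow> (\<lambda>n. (jbr n powr s * cmod (f n))^2) summable_on UNIV"

definition l2s_norm :: "real \<Rightarrow> (int \<Rightarrow> complex) \<Rightarrow> real" where
  "l2s_norm s f = sqrt (\<Sum>\<^sub>\<infinity>n. (jbr n powr s * cmod (f n))^2)"

definition in_CT_l2s :: "real \<Rightarrow> real \<Rightarrow> (real \<Rightarrow> int \<Rightarrow> complex) \<Rightarrow> bool" where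
  "in_CT_l2s s T w \<longleftrightarrow>
     (\<forall>t\<in>{0..T}. in_l2s s (w t)) \<and>
     (\<forall>t0\<in>{0..T}. ((\<lambda>t. l2s_norm s (w t - w t0)) \<longlongrightarrow> 0) (at t0 within {0..T}))"

definition CT_norm :: "real \<Rightarrow> real \<Rightarrow> (real \<Rightarrow> int \<Rightarrow> complex) \<Rightarrow> real" where
  "CT_norm s T w = (SUP t\<in>{0..T}. l2s_norm s (w t))"

definition star :: "(int \<Rightarrow> complex) \<Rightarrow> int \<Rightarrow> complex" where
  "star f n = cnj (f (- n))"

definition nhat :: "int \<Rightarrow> complex" where
  "nhat n = of_int n - (if n = 0 then \<i> else 0)"

definition ind :: "bool \<Rightarrow> complex" where
  "ind b = (if b then 1 else 0)"

definition m1 :: "int \<Rightarrow> int \<Rightarrow> int \<Rightarrow> int \<Rightarrow> complex" where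
  "m1 n n1 n2 n3 = 2 * \<i> * (of_int n * of_int (n2 + n3)) / (nhat n1 * nhat n2)
     * ind (n > 0) * ind (n2 + n3 < 0) * ind (n3 \<noteq> 0)"

definition m1t :: "int \<Rightarrow> int \<Rightarrow> int \<Rightarrow> int \<Rightarrow> complex" where
  "m1t n n1 n2 n3 = m1 n n1 n2 n3 * ind ((n1 + n2) * (n1 + n3) \<noteq> 0)"

definition Phi :: "int \<Rightarrow> int \<Rightarrow> int \<Rightarrow> int \<Rightarrow> int" where
  "Phi n n1 n2 n3 = n * \<bar>n\<bar> - n1 * \<bar>n1\<bar> - n2 * \<bar>n2\<bar> - n3 * \<bar>n3\<bar>"

text \<open>The resonant part N_R[omega](t,n); the sum over n = n1+n2+n3 with |Phi| <= M is an
  unconditional (infinite-sum) sum; only finitely many terms are nonzero.\<close>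
definition NR :: "real \<Rightarrow> (real \<Rightarrow> int \<Rightarrow> complex) \<Rightarrow> real \<Rightarrow> int \<Rightarrow> complex" where
  "NR M w t n = (if n > 0 then
     (\<Sum>\<^sub>\<infinity>(n1, n2, n3) \<in> {(n1, n2, n3). n1 + n2 + n3 = n \<and> \<bar>real_of_int (Phi n n1 n2 n3)\<bar> \<le> M}.
        exp (\<i> * of_real t * of_int (Phi n n1 n2 n3)) * m1t n n1 n2 n3
        * w t n1 * w t n2 * star (w t) n3)
   else 0)"

end

theory Submission
  imports Defs
begin

text \<open>
  On the support of the multiplier, n1 > n > 0 and n2 + n3 < 0. If n2 and n3 have opposite
  signs, the phase factors as |Phi| = 2 |n2 + n3| |n - nj| with nj the positive one of them;
  otherwise |Phi| >= 2 n |n2 + n3|. Together with |Phi| <= M this gives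
  |m1| <= 2 M / (|n2 + n3| q) with q the smallest of max 1 |n2|, max 1 |n1 + n2| and
  max 1 |n1 + n3|. Hence for fixed n1 the squared multiplier is summable over (n2, n3) with
  sum O(M^2): each of the three resulting terms is a product of inverse squares of two
  frequencies that determine (n2, n3).
  Moving the weight <n>^s onto the first factor (|n1| >= n) and applying Cauchy-Schwarz over
  the finitely many resonant triples bounds the trilinear operator at each fixed time by
  C M |u| |v| |x| in l^2_s. The difference estimate follows by trilinearity, and the C_T
  bounds by taking suprema over [0, T], which are finite by continuity.
\<close>

section \<open>Arithmetic of the resonance relation\<close>

definition abs1 :: "int \<Rightarrow> int" where
  "abs1 x = max 1 \<bar>x\<bar>"

lemma abs1_ge_1 [simp]: "abs1 x \<ge> 1"
  and abs1_pos [simp]: "abs1 x > 0" and abs1_nonneg [simp]: "abs1 x \<ge> 0"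
  by (simp_all add: abs1_def)

lemma cmod_nhat: "cmod (nhat x) = real_of_int (abs1 x)"
  by (cases "x = 0") (auto simp: nhat_def abs1_def)

lemma Phi_swap: "Phi n n1 n2 n3 = Phi n n1 n3 n2"
  by (simp add: Phi_def)

lemma abs_Phi_neg_neg:
  fixes n n1 n2 n3 :: int
  assumes "n = n1 + n2 + n3" "n2 \<le> 0" "n3 \<le> 0" "n \<ge> 0"
  shows "\<bar>Phi n n1 n2 n3\<bar> = 2 * n * \<bar>n2 + n3\<bar> + 2 * n2 * n3"
proof -
  have "Phi n n1 n2 n3 = -(2 * n * \<bar>n2 + n3\<bar> + 2 * n2 * n3)"
    using assms unfolding Phi_def by (cases "n1 \<ge> 0") (auto simp: algebra_simps)
  moreover have "0 \<le> n * \<bar>n2 + n3\<bar> + n2 * n3"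
    using assms by (simp add: mult_nonpos_nonpos)
  ultimately show ?thesis by simp
qed

lemma abs_Phi_pos_neg:
  fixes n n1 p q :: int
  assumes "n = n1 + p + q" "p > 0" "p + q < 0" "n > 0"
  shows "\<bar>Phi n n1 p q\<bar> = 2 * \<bar>p + q\<bar> * \<bar>n - p\<bar>"
proof -
  have "n1 > 0" "q < 0" using assms by linarith+
  then have "Phi n n1 p q = 2 * (p + q) * (n - p)"
    using assms unfolding Phi_def by (simp add: algebra_simps)
  then show ?thesis by (simp only: abs_mult abs_numeral)
qed

lemma mixed_sign_multiplier_bound:
  fixes n k p q A :: int
  assumes "n > 0" "k \<ge> 0" "p \<le> A" "0 \<le> q" "q \<le> A" "q \<le> \<bar>n - p\<bar>"
  shows "n * k * q \<le> 2 * k * \<bar>n - p\<bar> * A"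
proof (cases "2 * p < n")
  case True
  then have "n * k * q \<le> (2 * \<bar>n - p\<bar>) * k * A"
    using assms by (intro mult_mono) auto
  then show ?thesis by (simp add: algebra_simps)
next
  case False
  then have "n * k * q \<le> (2 * A) * k * \<bar>n - p\<bar>"
    using assms by (intro mult_mono) auto
  then show ?thesis by (simp add: algebra_simps)
qed

lemma resonant_multiplier_int_bound:
  fixes n n1 n2 n3 q :: int
  assumes "n = n1 + n2 + n3" "n > 0" "n2 + n3 < 0" "n1 + n2 \<noteq> 0" "n1 + n3 \<noteq> 0"
    and "0 \<le> q" "q \<le> abs1 n2" "q \<le> abs1 (n1 + n2)" "q \<le> abs1 (n1 + n3)"
  shows "n * \<bar>n2 + n3\<bar> * q \<le> \<bar>Phi n n1 n2 n3\<bar> * abs1 n2"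
proof -
  consider "n2 \<le> 0" "n3 \<le> 0" | "n2 > 0" | "n3 > 0" by linarith
  then show ?thesis
  proof cases
    case 1
    have "0 \<le> n2 * n3" using 1 by (simp add: mult_nonpos_nonpos)
    then have "n * \<bar>n2 + n3\<bar> \<le> \<bar>Phi n n1 n2 n3\<bar>"
      using assms 1 abs_Phi_neg_neg[of n n1 n2 n3] by linarith
    then show ?thesis using assms by (intro mult_mono) auto
  next
    case 2
    have "n * \<bar>n2 + n3\<bar> * q \<le> 2 * \<bar>n2 + n3\<bar> * \<bar>n - n2\<bar> * abs1 n2"
      using assms 2 by (intro mixed_sign_multiplier_bound) (auto simp: abs1_def)
    then show ?thesis using assms 2 abs_Phi_pos_neg[of n n1 n2 n3] by simp
  next
    case 3
    have "n * \<bar>n2 + n3\<bar> * q \<le> 2 * \<bar>n2 + n3\<bar> * \<bar>n - n3\<bar> * abs1 n2"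
      using assms 3 by (intro mixed_sign_multiplier_bound) (auto simp: abs1_def)
    then show ?thesis
      using assms 3 abs_Phi_pos_neg[of n n1 n3 n2] by (simp add: Phi_swap add.commute)
  qed
qed

lemma resonant_frequency_bound:
  fixes n n1 n2 n3 :: int
  assumes "n = n1 + n2 + n3" "n > 0" "n2 + n3 < 0" "n1 + n2 \<noteq> 0" "n1 + n3 \<noteq> 0"
  shows "\<bar>n2\<bar> \<le> n + \<bar>Phi n n1 n2 n3\<bar>" "\<bar>n3\<bar> \<le> n + \<bar>Phi n n1 n2 n3\<bar>"
proof -
  have mixed: "\<bar>p\<bar> \<le> n + 2 * \<bar>p + q\<bar> * \<bar>n - p\<bar> \<and> \<bar>q\<bar> \<le> n + 2 * \<bar>p + q\<bar> * \<bar>n - p\<bar>"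
    if "p > 0" "p + q < 0" "n \<noteq> p" for p q
  proof -
    define k d where "k = \<bar>p + q\<bar>" and "d = \<bar>n - p\<bar>"
    have "k \<ge> 1" "d \<ge> 1" using that by (auto simp: k_def d_def)
    then have "0 \<le> (k - 1) * (d - 1)" "d \<le> k * d" "1 \<le> k * d"
      using mult_mono[of 1 k 1 d] mult_right_mono[of 1 k d] by auto
    then have "k + d \<le> k * d + 1" "d \<le> k * d" "1 \<le> k * d"
      by (simp_all add: algebra_simps)
    moreover have "p \<le> n + d" "-q = k + p" using that by (auto simp: k_def d_def)
    ultimately show ?thesis using that by (simp add: k_def[symmetric] d_def[symmetric])
  qed
  consider "n2 \<le> 0" "n3 \<le> 0" | "n2 > 0" | "n3 > 0" by linarith
  then have "\<bar>n2\<bar> \<le> n + \<bar>Phi n n1 n2 n3\<bar> \<and> \<bar>n3\<bar> \<le> n + \<bar>Phi n n1 n2 n3\<bar>"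
  proof cases
    case 1
    have "\<bar>n2 + n3\<bar> \<le> n * \<bar>n2 + n3\<bar>" "0 \<le> n2 * n3"
      using assms 1 by (simp_all add: mult_nonpos_nonpos)
    then show ?thesis using assms 1 abs_Phi_neg_neg[of n n1 n2 n3] by linarith
  next
    case 2
    then show ?thesis using assms mixed[of n2 n3] abs_Phi_pos_neg[of n n1 n2 n3] by auto
  next
    case 3
    then show ?thesis
      using assms mixed[of n3 n2] abs_Phi_pos_neg[of n n1 n3 n2] by (auto simp: Phi_swap add.commute)
  qed
  then show "\<bar>n2\<bar> \<le> n + \<bar>Phi n n1 n2 n3\<bar>" "\<bar>n3\<bar> \<le> n + \<bar>Phi n n1 n2 n3\<bar>" by auto
qed

lemma m1t_nonzeroD:
  assumes "m1t n n1 n2 n3 \<noteq> 0"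
  shows "n > 0" "n2 + n3 < 0" "n3 \<noteq> 0" "n1 + n2 \<noteq> 0" "n1 + n3 \<noteq> 0"
  using assms unfolding m1t_def m1_def ind_def by (auto split: if_splits)

lemma cmod_m1t:
  assumes "m1t n n1 n2 n3 \<noteq> 0"
  shows "cmod (m1t n n1 n2 n3) = 2 * n * \<bar>n2 + n3\<bar> / (abs1 n1 * abs1 n2)"
proof -
  note nz = m1t_nonzeroD[OF assms]
  then have "m1t n n1 n2 n3 = 2 * \<i> * (of_int n * of_int (n2 + n3)) / (nhat n1 * nhat n2)"
    unfolding m1t_def m1_def ind_def by simp
  then show ?thesis using nz
    by (simp only: norm_mult norm_divide cmod_nhat norm_of_int of_int_abs) simp
qed

lemma cmod_m1t_mult_le:
  assumes nz: "m1t n n1 n2 n3 \<noteq> 0" and n: "n = n1 + n2 + n3"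
    and Phi: "\<bar>real_of_int (Phi n n1 n2 n3)\<bar> \<le> M"
    and q: "0 \<le> q" "q \<le> abs1 n2" "q \<le> abs1 (n1 + n2)" "q \<le> abs1 (n1 + n3)"
  shows "cmod (m1t n n1 n2 n3) * \<bar>n2 + n3\<bar> * q \<le> 2 * M"
proof -
  note nz' = m1t_nonzeroD[OF nz]
  have n1: "abs1 n1 = n1" "\<bar>n2 + n3\<bar> \<le> n1" "n1 > 0" using n nz' by (auto simp: abs1_def)
  have "real_of_int (n * \<bar>n2 + n3\<bar> * q) \<le> real_of_int (\<bar>Phi n n1 n2 n3\<bar> * abs1 n2)"
    using resonant_multiplier_int_bound[OF n nz'(1,2,4,5) q] by linarith
  also have "\<dots> \<le> M * abs1 n2" using Phi by (simp add: mult_right_mono del: of_int_abs)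
  finally have key: "n * \<bar>n2 + n3\<bar> * q \<le> M * abs1 n2" by simp
  have "cmod (m1t n n1 n2 n3) * \<bar>n2 + n3\<bar> * q \<le> cmod (m1t n n1 n2 n3) * n1 * q"
    using n1 q by (intro mult_right_mono mult_left_mono) auto
  also have "\<dots> = 2 * (n * \<bar>n2 + n3\<bar> * q) / abs1 n2"
    using n1(3) unfolding cmod_m1t[OF nz] n1(1) by (simp add: field_simps)
  also have "\<dots> \<le> 2 * M"
    using key by (subst pos_divide_le_eq) auto
  finally show ?thesis .
qed

section \<open>Square summability of the multiplier\<close>

definition inv_sq :: "int \<Rightarrow> real" where
  "inv_sq a = 1 / (abs1 a)\<^sup>2"

lemma inv_sq_nonneg [simp]: "inv_sq a \<ge> 0"
  by (simp add: inv_sq_def)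

lemma cmod_m1t_sq_le:
  assumes nz: "m1t n n1 n2 n3 \<noteq> 0" and n: "n = n1 + n2 + n3"
    and Phi: "\<bar>real_of_int (Phi n n1 n2 n3)\<bar> \<le> M"
  shows "(cmod (m1t n n1 n2 n3))\<^sup>2
    \<le> 4 * M\<^sup>2 * inv_sq (n2 + n3) * (inv_sq n2 + inv_sq (n1 + n2) + inv_sq (n1 + n3))"
proof -
  define q where "q = min (abs1 n2) (min (abs1 (n1 + n2)) (abs1 (n1 + n3)))"
  define k where "k = abs1 (n2 + n3)"
  have k: "k = \<bar>n2 + n3\<bar>" using m1t_nonzeroD(2)[OF nz] by (simp add: k_def abs1_def)
  have pos: "q \<ge> 1" "k \<ge> 1" by (simp_all add: q_def k_def)
  have "cmod (m1t n n1 n2 n3) * k * q \<le> 2 * M"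
    unfolding k using pos by (intro cmod_m1t_mult_le[OF nz n Phi]) (auto simp: q_def)
  then have "(cmod (m1t n n1 n2 n3) * k * q)\<^sup>2 \<le> (2 * M)\<^sup>2"
    using pos by (intro power_mono) auto
  then have "(cmod (m1t n n1 n2 n3))\<^sup>2 \<le> 4 * M\<^sup>2 * (1 / k\<^sup>2) * (1 / q\<^sup>2)"
    using pos by (simp add: field_simps)
  also have "\<dots> \<le> 4 * M\<^sup>2 * inv_sq (n2 + n3) * (inv_sq n2 + inv_sq (n1 + n2) + inv_sq (n1 + n3))"
    unfolding k_def inv_sq_def q_def by (intro mult_left_mono) (auto simp: min_def)
  finally show ?thesis .
qed

lemma sum_inv_sq_symmetric_interval:
  "(\<Sum>a\<in>{-int N..int N}. inv_sq a) \<le> 5 - 4 / (real N + 1)"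
proof (induction N)
  case 0
  show ?case by (simp add: inv_sq_def abs1_def)
next
  case (Suc N)
  define x where "x = real N + 1"
  have x: "x \<ge> 1" by (simp add: x_def)
  have "{-int (Suc N)..int (Suc N)} = insert (int N + 1) (insert (-(int N + 1)) {-int N..int N})"
    by auto
  then have "(\<Sum>a\<in>{-int (Suc N)..int (Suc N)}. inv_sq a) = 2 / x\<^sup>2 + (\<Sum>a\<in>{-int N..int N}. inv_sq a)"
    by (simp add: inv_sq_def abs1_def x_def add.commute)
  also have "\<dots> \<le> 2 / x\<^sup>2 + 5 - 4 / x" using Suc by (simp add: x_def)
  also have "\<dots> \<le> 5 - 4 / (x + 1)"
  proof -
    have "2 * (x + 1) + 4 * x\<^sup>2 \<le> 4 * x * (x + 1)" using x by (simp add: algebra_simps power2_eq_square)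
    then have "2 / x\<^sup>2 + 4 / (x + 1) \<le> 4 / x" using x by (simp add: divide_simps power2_eq_square)
    then show ?thesis by simp
  qed
  finally show ?case by (simp add: x_def)
qed

lemma sum_inv_sq_le:
  assumes "finite A"
  shows "(\<Sum>a\<in>A. inv_sq a) \<le> 5"
proof -
  define N where "N = nat (Max (abs ` A))"
  have "\<bar>a\<bar> \<le> Max (abs ` A)" if "a \<in> A" for a
    using assms that by simp
  then have "A \<subseteq> {-int N..int N}" by (force simp: N_def)
  then have "(\<Sum>a\<in>A. inv_sq a) \<le> (\<Sum>a\<in>{-int N..int N}. inv_sq a)"
    by (intro sum_mono2) auto
  also have "\<dots> \<le> 5 - 4 / (real N + 1)" by (rule sum_inv_sq_symmetric_interval)
  also have "\<dots> \<le> 5" by simp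
  finally show ?thesis .
qed

lemma sum_le_sum_fst_mult_sum_snd:
  fixes F :: "'a \<Rightarrow> 'c::linordered_semidom" and H :: "'b \<Rightarrow> 'c"
  assumes "finite G" "\<And>a. F a \<ge> 0" "\<And>b. H b \<ge> 0"
  shows "(\<Sum>g\<in>G. F (fst g) * H (snd g)) \<le> (\<Sum>a\<in>fst ` G. F a) * (\<Sum>b\<in>snd ` G. H b)"
proof -
  have "(\<Sum>g\<in>G. F (fst g) * H (snd g)) \<le> (\<Sum>g\<in>fst ` G \<times> snd ` G. F (fst g) * H (snd g))"
    using assms by (intro sum_mono2) (auto intro: rev_image_eqI)
  also have "\<dots> = (\<Sum>a\<in>fst ` G. F a) * (\<Sum>b\<in>snd ` G. H b)"
    unfolding sum_product sum.cartesian_product by (rule sum.cong) auto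
  finally show ?thesis .
qed

lemma sum_inv_sq_inj_le:
  assumes "finite G" "inj_on \<phi> G"
  shows "(\<Sum>g\<in>G. inv_sq (fst (\<phi> g)) * inv_sq (snd (\<phi> g))) \<le> 25"
proof -
  have "(\<Sum>g\<in>G. inv_sq (fst (\<phi> g)) * inv_sq (snd (\<phi> g))) = (\<Sum>p\<in>\<phi> ` G. inv_sq (fst p) * inv_sq (snd p))"
    by (simp add: sum.reindex[OF assms(2)])
  also have "\<dots> \<le> (\<Sum>a\<in>fst ` \<phi> ` G. inv_sq a) * (\<Sum>b\<in>snd ` \<phi> ` G. inv_sq b)"
    using assms by (intro sum_le_sum_fst_mult_sum_snd) auto
  also have "\<dots> \<le> 5 * 5"
    using assms by (intro mult_mono sum_inv_sq_le sum_nonneg) auto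
  finally show ?thesis by simp
qed

lemma sum_cmod_m1t_sq_le:
  assumes "finite G"
    and "\<And>n1 n2 n3. (n1, n2, n3) \<in> G \<Longrightarrow> n1 = a \<and> m1t (n1 + n2 + n3) n1 n2 n3 \<noteq> 0
           \<and> \<bar>real_of_int (Phi (n1 + n2 + n3) n1 n2 n3)\<bar> \<le> M"
  shows "(\<Sum>(n1, n2, n3)\<in>G. (cmod (m1t (n1 + n2 + n3) n1 n2 n3))\<^sup>2) \<le> 300 * M\<^sup>2"
proof -
  have fst_G: "n1 = a" if "(n1, n2, n3) \<in> G" for n1 n2 n3
    using assms(2) that by blast
  have inj: "inj_on (\<lambda>(n1, n2, n3). (n2, n2 + n3)) G" "inj_on (\<lambda>(n1, n2, n3). (n1 + n2, n2 + n3)) G"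
    "inj_on (\<lambda>(n1, n2, n3). (n1 + n3, n2 + n3)) G"
    by (auto simp: inj_on_def dest!: fst_G)
  have "(\<Sum>(n1, n2, n3)\<in>G. (cmod (m1t (n1 + n2 + n3) n1 n2 n3))\<^sup>2)
    \<le> (\<Sum>(n1, n2, n3)\<in>G. 4 * M\<^sup>2 * inv_sq (n2 + n3) * (inv_sq n2 + inv_sq (n1 + n2) + inv_sq (n1 + n3)))"
    using assms(2) by (intro sum_mono) (auto intro!: cmod_m1t_sq_le)
  also have "\<dots> = 4 * M\<^sup>2 * ((\<Sum>(n1, n2, n3)\<in>G. inv_sq n2 * inv_sq (n2 + n3))
      + (\<Sum>(n1, n2, n3)\<in>G. inv_sq (n1 + n2) * inv_sq (n2 + n3))
      + (\<Sum>(n1, n2, n3)\<in>G. inv_sq (n1 + n3) * inv_sq (n2 + n3)))"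
    by (simp add: sum_distrib_left sum.distrib case_prod_beta algebra_simps)
  also have "\<dots> \<le> 4 * M\<^sup>2 * (25 + 25 + 25)"
    using sum_inv_sq_inj_le[OF assms(1) inj(1)] sum_inv_sq_inj_le[OF assms(1) inj(2)]
      sum_inv_sq_inj_le[OF assms(1) inj(3)]
    by (intro mult_left_mono add_mono) (auto simp: case_prod_beta)
  finally show ?thesis by simp
qed

section \<open>Weighted l^2 norms\<close>

definition l2s_coeff :: "real \<Rightarrow> (int \<Rightarrow> complex) \<Rightarrow> int \<Rightarrow> real" where
  "l2s_coeff s f n = jbr n powr s * cmod (f n)"

lemma l2s_coeff_nonneg [simp]: "l2s_coeff s f n \<ge> 0"
  by (simp add: l2s_coeff_def)

lemma in_l2s_iff_coeff: "in_l2s s f \<longleftrightarrow> (\<lambda>n. (l2s_coeff s f n)\<^sup>2) summable_on UNIV"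
  by (simp add: in_l2s_def l2s_coeff_def)

lemma l2s_norm_eq_coeff: "l2s_norm s f = sqrt (\<Sum>\<^sub>\<infinity>n. (l2s_coeff s f n)\<^sup>2)"
  by (simp add: l2s_norm_def l2s_coeff_def)

lemma l2s_norm_nonneg [simp]: "l2s_norm s f \<ge> 0"
  by (simp add: l2s_norm_eq_coeff infsum_nonneg)

lemma l2s_norm_sq: "(l2s_norm s f)\<^sup>2 = (\<Sum>\<^sub>\<infinity>n. (l2s_coeff s f n)\<^sup>2)"
  by (simp add: l2s_norm_eq_coeff infsum_nonneg)

lemma sum_l2s_coeff_sq_le:
  assumes "in_l2s s f" "finite F"
  shows "(\<Sum>n\<in>F. (l2s_coeff s f n)\<^sup>2) \<le> (l2s_norm s f)\<^sup>2"
  unfolding l2s_norm_sq using assms unfolding in_l2s_iff_coeff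
  by (intro finite_sum_le_infsum) auto

lemma l2s_bound_if_finite_sums:
  assumes "\<And>F. finite F \<Longrightarrow> (\<Sum>n\<in>F. (l2s_coeff s f n)\<^sup>2) \<le> B\<^sup>2" "B \<ge> 0"
  shows "in_l2s s f" "l2s_norm s f \<le> B"
proof -
  show summable: "in_l2s s f"
    unfolding in_l2s_iff_coeff using assms(1)
    by (intro nonneg_bdd_above_summable_on) (auto simp: bdd_above_def)
  have "(l2s_norm s f)\<^sup>2 \<le> B\<^sup>2"
    unfolding l2s_norm_sq using summable assms(1) unfolding in_l2s_iff_coeff
    by (intro infsum_le_finite_sums) auto
  then show "l2s_norm s f \<le> B" using assms(2) by (simp add: power2_le_iff_abs_le)
qed

lemma jbr_powr_ge_1: "s \<ge> 0 \<Longrightarrow> jbr n powr s \<ge> 1"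
  by (simp add: jbr_def ge_one_powr_ge_zero)

lemma jbr_powr_mono: "\<bar>n\<bar> \<le> \<bar>m\<bar> \<Longrightarrow> s \<ge> 0 \<Longrightarrow> jbr n powr s \<le> jbr m powr s"
  unfolding jbr_def by (intro powr_mono2) (auto simp: abs_le_square_iff simp flip: of_int_abs of_int_power)

lemma cmod_le_l2s_coeff: "s \<ge> 0 \<Longrightarrow> cmod (f n) \<le> l2s_coeff s f n"
  unfolding l2s_coeff_def using jbr_powr_ge_1 mult_right_mono[of 1 "jbr n powr s" "cmod (f n)"] by auto

lemma l2s_norm_triangle_pointwise:
  assumes "in_l2s s a" "in_l2s s b" "\<And>n. cmod (c n) \<le> cmod (a n) + cmod (b n)"
  shows "in_l2s s c" "l2s_norm s c \<le> l2s_norm s a + l2s_norm s b"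
proof -
  have "(\<Sum>n\<in>F. (l2s_coeff s c n)\<^sup>2) \<le> (l2s_norm s a + l2s_norm s b)\<^sup>2" if "finite F" for F
  proof -
    have "L2_set (l2s_coeff s c) F \<le> L2_set (\<lambda>n. l2s_coeff s a n + l2s_coeff s b n) F"
      using assms(3) by (intro L2_set_mono)
        (auto simp: l2s_coeff_def simp flip: distrib_left intro!: mult_left_mono)
    also have "\<dots> \<le> L2_set (l2s_coeff s a) F + L2_set (l2s_coeff s b) F"
      by (rule L2_set_triangle_ineq)
    also have "\<dots> \<le> l2s_norm s a + l2s_norm s b"
      using sum_l2s_coeff_sq_le[OF assms(1) that] sum_l2s_coeff_sq_le[OF assms(2) that]
      unfolding L2_set_def by (intro add_mono real_le_lsqrt) auto
    finally show ?thesis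
      unfolding L2_set_def by (rule sqrt_le_D)
  qed
  then show "in_l2s s c" "l2s_norm s c \<le> l2s_norm s a + l2s_norm s b"
    using l2s_bound_if_finite_sums[of s c "l2s_norm s a + l2s_norm s b"] by auto
qed

lemma
  assumes "in_l2s s a" "in_l2s s b"
  shows in_l2s_add: "in_l2s s (\<lambda>n. a n + b n)"
    and l2s_norm_add_le: "l2s_norm s (\<lambda>n. a n + b n) \<le> l2s_norm s a + l2s_norm s b"
  using l2s_norm_triangle_pointwise[OF assms, of "\<lambda>n. a n + b n"] by (simp_all add: norm_triangle_ineq)

lemma
  assumes "in_l2s s a" "in_l2s s b"
  shows in_l2s_diff: "in_l2s s (a - b)"
    and l2s_norm_diff_le: "l2s_norm s (a - b) \<le> l2s_norm s a + l2s_norm s b"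
  using l2s_norm_triangle_pointwise[OF assms, of "a - b"] by (simp_all add: norm_triangle_ineq4)

lemma l2s_norm_diff_commute: "l2s_norm s (a - b) = l2s_norm s (b - a)"
  by (simp add: l2s_norm_def norm_minus_commute)

lemma abs_l2s_norm_diff_le:
  assumes "in_l2s s a" "in_l2s s b"
  shows "\<bar>l2s_norm s a - l2s_norm s b\<bar> \<le> l2s_norm s (a - b)"
proof -
  have "l2s_norm s a \<le> l2s_norm s (a - b) + l2s_norm s b"
    by (rule l2s_norm_triangle_pointwise(2)[OF in_l2s_diff[OF assms] assms(2)])
      (metis add.commute minus_apply norm_triangle_sub)
  moreover have "l2s_norm s b \<le> l2s_norm s (b - a) + l2s_norm s a"
    by (rule l2s_norm_triangle_pointwise(2)[OF in_l2s_diff[OF assms(2,1)] assms(1)])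
      (metis add.commute minus_apply norm_triangle_sub)
  ultimately show ?thesis using l2s_norm_diff_commute[of s a b] by linarith
qed

section \<open>The trilinear resonant operator\<close>

definition res_set :: "real \<Rightarrow> int \<Rightarrow> (int \<times> int \<times> int) set" where
  "res_set M n = {(n1, n2, n3). n1 + n2 + n3 = n \<and> \<bar>real_of_int (Phi n n1 n2 n3)\<bar> \<le> M
     \<and> m1t n n1 n2 n3 \<noteq> 0}"

definition res_term ::
  "real \<Rightarrow> (int \<Rightarrow> complex) \<Rightarrow> (int \<Rightarrow> complex) \<Rightarrow> (int \<Rightarrow> complex) \<Rightarrow> int \<Rightarrow> int \<times> int \<times> int \<Rightarrow> complex"
  where "res_term t u v x n = (\<lambda>(n1, n2, n3).
    exp (\<i> * of_real t * of_int (Phi n n1 n2 n3)) * m1t n n1 n2 n3 * u n1 * v n2 * star x n3)"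

text \<open>NR3 M t u v x is the operator N_R with the three copies of omega t replaced by u, v
  and x; summing only over the support of m1t turns the infinite sum into a finite one.\<close>

definition NR3 ::
  "real \<Rightarrow> real \<Rightarrow> (int \<Rightarrow> complex) \<Rightarrow> (int \<Rightarrow> complex) \<Rightarrow> (int \<Rightarrow> complex) \<Rightarrow> int \<Rightarrow> complex"
  where "NR3 M t u v x n = (if n > 0 then \<Sum>p\<in>res_set M n. res_term t u v x n p else 0)"

lemma finite_res_set: "finite (res_set M n)"
proof -
  define N where "N = \<bar>n\<bar> + \<lceil>M\<rceil>"
  have "res_set M n \<subseteq> (\<lambda>(n2, n3). (n - n2 - n3, n2, n3)) ` ({-N..N} \<times> {-N..N})"
  proof
    fix p assume p: "p \<in> res_set M n"
    then obtain n1 n2 n3 where p_eq: "p = (n1, n2, n3)" and n: "n = n1 + n2 + n3"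
      and Phi: "\<bar>real_of_int (Phi n n1 n2 n3)\<bar> \<le> M" and nz: "m1t n n1 n2 n3 \<noteq> 0"
      by (auto simp: res_set_def)
    have "\<bar>Phi n n1 n2 n3\<bar> \<le> \<lceil>M\<rceil>" using Phi by linarith
    then have "(n2, n3) \<in> {-N..N} \<times> {-N..N}"
      using resonant_frequency_bound[OF n m1t_nonzeroD(1,2,4,5)[OF nz]] by (auto simp: N_def)
    then show "p \<in> (\<lambda>(n2, n3). (n - n2 - n3, n2, n3)) ` ({-N..N} \<times> {-N..N})"
      using p_eq n by force
  qed
  then show ?thesis by (rule finite_subset) auto
qed

lemma NR_eq_NR3: "NR M w t = NR3 M t (w t) (w t) (w t)"
proof (rule ext)
  fix n
  have "(\<Sum>\<^sub>\<infinity>p\<in>{(n1, n2, n3). n1 + n2 + n3 = n \<and> \<bar>real_of_int (Phi n n1 n2 n3)\<bar> \<le> M}.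
          res_term t (w t) (w t) (w t) n p)
        = (\<Sum>\<^sub>\<infinity>p\<in>res_set M n. res_term t (w t) (w t) (w t) n p)"
    by (intro infsum_cong_neutral) (auto simp: res_set_def res_term_def)
  then show "NR M w t n = NR3 M t (w t) (w t) (w t) n"
    by (simp add: NR_def NR3_def res_term_def finite_res_set)
qed

lemma NR3_diff:
  "NR3 M t a a a n - NR3 M t b b b n
     = NR3 M t (a - b) a a n + NR3 M t b (a - b) a n + NR3 M t b b (a - b) n"
  unfolding NR3_def
  by (auto simp: res_term_def star_def algebra_simps simp flip: sum_subtractf sum.distrib
      intro!: sum.cong)

lemma norm_res_term_le:
  assumes "s \<ge> 0" "(n1, n2, n3) \<in> res_set M n"
  shows "jbr n powr s * cmod (res_term t u v x n (n1, n2, n3))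
    \<le> cmod (m1t n n1 n2 n3) * l2s_coeff s u n1 * (l2s_coeff s v n2 * l2s_coeff s x (-n3))"
proof -
  have n: "n = n1 + n2 + n3" and nz: "m1t n n1 n2 n3 \<noteq> 0" using assms(2) by (auto simp: res_set_def)
  have "\<bar>n\<bar> \<le> \<bar>n1\<bar>" using m1t_nonzeroD[OF nz] n by linarith
  then have u: "jbr n powr s * cmod (u n1) \<le> l2s_coeff s u n1"
    unfolding l2s_coeff_def using assms(1) by (intro mult_right_mono jbr_powr_mono) auto
  have exp: "cmod (exp (\<i> * of_real t * of_int (Phi n n1 n2 n3))) = 1"
    using norm_exp_i_times[of "t * Phi n n1 n2 n3"] by (simp add: mult.assoc)
  have "jbr n powr s * cmod (res_term t u v x n (n1, n2, n3))
      = cmod (m1t n n1 n2 n3) * (jbr n powr s * cmod (u n1)) * (cmod (v n2) * cmod (x (-n3)))"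
    by (simp add: res_term_def star_def norm_mult exp)
  also have "\<dots> \<le> cmod (m1t n n1 n2 n3) * l2s_coeff s u n1 * (l2s_coeff s v n2 * l2s_coeff s x (-n3))"
    using u assms(1) by (intro mult_mono mult_left_mono cmod_le_l2s_coeff) auto
  finally show ?thesis .
qed

lemma sum_res_set_coeff_sq_le:
  assumes "in_l2s s v" "in_l2s s x"
  shows "(\<Sum>(n1, n2, n3)\<in>res_set M n. (l2s_coeff s v n2 * l2s_coeff s x (-n3))\<^sup>2)
    \<le> (l2s_norm s v)\<^sup>2 * (l2s_norm s x)\<^sup>2"
proof -
  let ?\<phi> = "\<lambda>(n1::int, n2::int, n3::int). (n2, -n3)"
  have inj: "inj_on ?\<phi> (res_set M n)" by (auto simp: inj_on_def res_set_def)
  have "(\<Sum>(n1, n2, n3)\<in>res_set M n. (l2s_coeff s v n2 * l2s_coeff s x (-n3))\<^sup>2)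
      = (\<Sum>g\<in>?\<phi> ` res_set M n. (l2s_coeff s v (fst g))\<^sup>2 * (l2s_coeff s x (snd g))\<^sup>2)"
    unfolding sum.reindex[OF inj] by (simp add: case_prod_beta power_mult_distrib)
  also have "\<dots> \<le> (\<Sum>a\<in>fst ` ?\<phi> ` res_set M n. (l2s_coeff s v a)\<^sup>2)
      * (\<Sum>b\<in>snd ` ?\<phi> ` res_set M n. (l2s_coeff s x b)\<^sup>2)"
    by (intro sum_le_sum_fst_mult_sum_snd) (auto simp: finite_res_set)
  also have "\<dots> \<le> (l2s_norm s v)\<^sup>2 * (l2s_norm s x)\<^sup>2"
    using assms by (intro mult_mono sum_l2s_coeff_sq_le sum_nonneg) (auto simp: finite_res_set)
  finally show ?thesis .
qed

lemma l2s_coeff_NR3_sq_le: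
  assumes "s \<ge> 0" "in_l2s s v" "in_l2s s x"
  shows "(l2s_coeff s (NR3 M t u v x) n)\<^sup>2
    \<le> (\<Sum>(n1, n2, n3)\<in>res_set M n. (cmod (m1t n n1 n2 n3) * l2s_coeff s u n1)\<^sup>2)
      * ((l2s_norm s v)\<^sup>2 * (l2s_norm s x)\<^sup>2)"
proof (cases "n > 0")
  case True
  let ?a = "\<lambda>(n1, n2, n3). cmod (m1t n n1 n2 n3) * l2s_coeff s u n1"
  let ?b = "\<lambda>(n1::int, n2, n3). l2s_coeff s v n2 * l2s_coeff s x (-n3)"
  have "l2s_coeff s (NR3 M t u v x) n
      \<le> jbr n powr s * (\<Sum>p\<in>res_set M n. cmod (res_term t u v x n p))"
    unfolding l2s_coeff_def NR3_def using True by (simp add: mult_left_mono norm_sum)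
  also have "\<dots> \<le> (\<Sum>p\<in>res_set M n. ?a p * ?b p)"
    unfolding sum_distrib_left using assms(1) by (intro sum_mono) (auto intro: norm_res_term_le)
  finally have "(l2s_coeff s (NR3 M t u v x) n)\<^sup>2 \<le> (\<Sum>p\<in>res_set M n. ?a p * ?b p)\<^sup>2"
    by (intro power_mono) auto
  also have "\<dots> \<le> (\<Sum>p\<in>res_set M n. (?a p)\<^sup>2) * (\<Sum>p\<in>res_set M n. (?b p)\<^sup>2)"
    by (rule Cauchy_Schwarz_ineq_sum)
  also have "\<dots> \<le> (\<Sum>p\<in>res_set M n. (?a p)\<^sup>2) * ((l2s_norm s v)\<^sup>2 * (l2s_norm s x)\<^sup>2)"
    using sum_res_set_coeff_sq_le[OF assms(2,3)]
    by (intro mult_left_mono sum_nonneg) (auto simp: case_prod_beta)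
  finally show ?thesis by (simp add: case_prod_beta)
qed (simp add: NR3_def l2s_coeff_def case_prod_beta sum_nonneg)

lemma sum_res_sets_m1t_sq_le:
  assumes "in_l2s s u" "finite F"
  shows "(\<Sum>n\<in>F. \<Sum>(n1, n2, n3)\<in>res_set M n. (cmod (m1t n n1 n2 n3) * l2s_coeff s u n1)\<^sup>2)
    \<le> 300 * M\<^sup>2 * (l2s_norm s u)\<^sup>2"
proof -
  define g where "g = (\<lambda>(n1, n2, n3). (cmod (m1t (n1 + n2 + n3) n1 n2 n3))\<^sup>2 * (l2s_coeff s u n1)\<^sup>2)"
  define K where "K = (\<Union>n\<in>F. res_set M n)"
  have K: "finite K" using assms(2) by (simp add: K_def finite_res_set)
  have "(\<Sum>n\<in>F. \<Sum>(n1, n2, n3)\<in>res_set M n. (cmod (m1t n n1 n2 n3) * l2s_coeff s u n1)\<^sup>2)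
      = (\<Sum>n\<in>F. \<Sum>p\<in>res_set M n. g p)"
    by (intro sum.cong) (auto simp: res_set_def g_def power_mult_distrib)
  also have "\<dots> = (\<Sum>p\<in>K. g p)"
    unfolding K_def using assms(2) finite_res_set
    by (intro sum.UNION_disjoint[symmetric]) (auto simp: res_set_def)
  also have "\<dots> = (\<Sum>a\<in>fst ` K. \<Sum>p\<in>{p \<in> K. fst p = a}. g p)"
    using K by (intro sum.group[symmetric]) auto
  also have "\<dots> \<le> (\<Sum>a\<in>fst ` K. (l2s_coeff s u a)\<^sup>2 * (300 * M\<^sup>2))"
  proof (rule sum_mono)
    fix a
    have fin: "finite {p \<in> K. fst p = a}" using K by simp
    have "(\<Sum>p\<in>{p \<in> K. fst p = a}. g p)
        = (l2s_coeff s u a)\<^sup>2 * (\<Sum>(n1, n2, n3)\<in>{p \<in> K. fst p = a}. (cmod (m1t (n1 + n2 + n3) n1 n2 n3))\<^sup>2)"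
      unfolding sum_distrib_left by (intro sum.cong) (auto simp: g_def)
    also have "\<dots> \<le> (l2s_coeff s u a)\<^sup>2 * (300 * M\<^sup>2)"
      by (intro mult_left_mono sum_cmod_m1t_sq_le[OF fin]) (auto simp: K_def res_set_def)
    finally show "(\<Sum>p\<in>{p \<in> K. fst p = a}. g p) \<le> (l2s_coeff s u a)\<^sup>2 * (300 * M\<^sup>2)" .
  qed
  also have "\<dots> \<le> (l2s_norm s u)\<^sup>2 * (300 * M\<^sup>2)"
    unfolding sum_distrib_right[symmetric] using assms(1) K
    by (intro mult_right_mono sum_l2s_coeff_sq_le) auto
  finally show ?thesis by (simp add: mult.commute)
qed

lemma l2s_norm_NR3_le:
  assumes "s \<ge> 0" "M \<ge> 0" "in_l2s s u" "in_l2s s v" "in_l2s s x"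
  shows "in_l2s s (NR3 M t u v x)"
    "l2s_norm s (NR3 M t u v x) \<le> 18 * M * l2s_norm s u * l2s_norm s v * l2s_norm s x"
proof -
  have bound: "(\<Sum>n\<in>F. (l2s_coeff s (NR3 M t u v x) n)\<^sup>2)
      \<le> (18 * M * l2s_norm s u * l2s_norm s v * l2s_norm s x)\<^sup>2" if "finite F" for F
  proof -
    have "(\<Sum>n\<in>F. (l2s_coeff s (NR3 M t u v x) n)\<^sup>2)
        \<le> (\<Sum>n\<in>F. (\<Sum>(n1, n2, n3)\<in>res_set M n. (cmod (m1t n n1 n2 n3) * l2s_coeff s u n1)\<^sup>2)
          * ((l2s_norm s v)\<^sup>2 * (l2s_norm s x)\<^sup>2))"
      using assms by (intro sum_mono l2s_coeff_NR3_sq_le)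
    also have "\<dots> = (\<Sum>n\<in>F. \<Sum>(n1, n2, n3)\<in>res_set M n. (cmod (m1t n n1 n2 n3) * l2s_coeff s u n1)\<^sup>2)
          * ((l2s_norm s v)\<^sup>2 * (l2s_norm s x)\<^sup>2)"
      by (rule sum_distrib_right[symmetric])
    also have "\<dots> \<le> 300 * M\<^sup>2 * (l2s_norm s u)\<^sup>2 * ((l2s_norm s v)\<^sup>2 * (l2s_norm s x)\<^sup>2)"
      using assms that by (intro mult_right_mono sum_res_sets_m1t_sq_le) auto
    also have "\<dots> \<le> (18 * M * l2s_norm s u * l2s_norm s v * l2s_norm s x)\<^sup>2"
      by (simp add: power_mult_distrib)
    finally show ?thesis .
  qed
  have "18 * M * l2s_norm s u * l2s_norm s v * l2s_norm s x \<ge> 0" using assms(2) by simp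
  then show "in_l2s s (NR3 M t u v x)"
    "l2s_norm s (NR3 M t u v x) \<le> 18 * M * l2s_norm s u * l2s_norm s v * l2s_norm s x"
    by (simp_all add: l2s_bound_if_finite_sums[OF bound])
qed

lemma l2s_norm_NR3_diff_le:
  assumes "s \<ge> 0" "M \<ge> 0" "in_l2s s a" "in_l2s s b"
  shows "l2s_norm s (NR3 M t a a a - NR3 M t b b b)
    \<le> 27 * M * ((l2s_norm s a)\<^sup>2 + (l2s_norm s b)\<^sup>2) * l2s_norm s (a - b)"
proof -
  define A B D where "A = l2s_norm s a" and "B = l2s_norm s b" and "D = l2s_norm s (a - b)"
  have d: "in_l2s s (a - b)" using assms(3,4) by (rule in_l2s_diff)
  note T = l2s_norm_NR3_le[OF assms(1,2)]
  have "l2s_norm s (NR3 M t a a a - NR3 M t b b b)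
      = l2s_norm s (\<lambda>n. (NR3 M t (a - b) a a n + NR3 M t b (a - b) a n) + NR3 M t b b (a - b) n)"
    by (rule arg_cong[where f = "l2s_norm s"]) (simp add: fun_eq_iff NR3_diff)
  also have "\<dots> \<le> l2s_norm s (\<lambda>n. NR3 M t (a - b) a a n + NR3 M t b (a - b) a n)
        + l2s_norm s (NR3 M t b b (a - b))"
    using T(1)[OF d assms(3,3)] T(1)[OF assms(4) d assms(3)] T(1)[OF assms(4,4) d]
    by (intro l2s_norm_add_le in_l2s_add)
  also have "\<dots> \<le> l2s_norm s (NR3 M t (a - b) a a) + l2s_norm s (NR3 M t b (a - b) a)
        + l2s_norm s (NR3 M t b b (a - b))"
    using T(1)[OF d assms(3,3)] T(1)[OF assms(4) d assms(3)] by (intro add_right_mono l2s_norm_add_le)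
  also have "\<dots> \<le> 18 * M * D * A * A + 18 * M * B * D * A + 18 * M * B * B * D"
    unfolding A_def B_def D_def
    using T(2)[OF d assms(3,3)] T(2)[OF assms(4) d assms(3)] T(2)[OF assms(4,4) d]
    by (intro add_mono)
  also have "\<dots> \<le> 27 * M * (A\<^sup>2 + B\<^sup>2) * D"
  proof -
    have "2 * (A * B) \<le> A\<^sup>2 + B\<^sup>2" using zero_le_power2[of "A - B"] unfolding power2_diff by linarith
    then have "18 * (A\<^sup>2 + A * B + B\<^sup>2) \<le> 27 * (A\<^sup>2 + B\<^sup>2)"
      unfolding distrib_left by linarith
    then have "18 * (A\<^sup>2 + A * B + B\<^sup>2) * (M * D) \<le> 27 * (A\<^sup>2 + B\<^sup>2) * (M * D)"
      using assms(2) by (intro mult_right_mono) (auto simp: D_def)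
    then show ?thesis by (simp add: algebra_simps power2_eq_square)
  qed
  finally show ?thesis by (simp add: A_def B_def D_def)
qed

section \<open>Continuity in time\<close>

lemma in_l2s_if_in_CT_l2s: "in_CT_l2s s T w \<Longrightarrow> t \<in> {0..T} \<Longrightarrow> in_l2s s (w t)"
  by (simp add: in_CT_l2s_def)

lemma in_CT_l2s_diff:
  assumes "in_CT_l2s s T w" "in_CT_l2s s T w'"
  shows "in_CT_l2s s T (\<lambda>t. w t - w' t)"
  unfolding in_CT_l2s_def
proof (intro conjI ballI)
  fix t assume "t \<in> {0..T}"
  then show "in_l2s s (w t - w' t)" using assms by (intro in_l2s_diff in_l2s_if_in_CT_l2s)
next
  fix t0 assume t0: "t0 \<in> {0..T}"
  have "((\<lambda>t. l2s_norm s (w t - w t0) + l2s_norm s (w' t - w' t0)) \<longlongrightarrow> 0) (at t0 within {0..T})"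
    using assms t0 by (intro tendsto_add_zero) (auto simp: in_CT_l2s_def)
  moreover have "l2s_norm s ((w t - w' t) - (w t0 - w' t0))
      \<le> l2s_norm s (w t - w t0) + l2s_norm s (w' t - w' t0)" if "t \<in> {0..T}" for t
  proof -
    have "(w t - w' t) - (w t0 - w' t0) = (w t - w t0) - (w' t - w' t0)"
      by (simp add: fun_eq_iff)
    then show ?thesis
      using assms that t0 by (simp add: l2s_norm_diff_le in_l2s_diff in_l2s_if_in_CT_l2s)
  qed
  then have "\<forall>\<^sub>F t in at t0 within {0..T}. norm (l2s_norm s ((w t - w' t) - (w t0 - w' t0)))
      \<le> l2s_norm s (w t - w t0) + l2s_norm s (w' t - w' t0)"
    unfolding eventually_at_filter by (auto intro: always_eventually)
  ultimately show "((\<lambda>t. l2s_norm s ((w t - w' t) - (w t0 - w' t0))) \<longlongrightarrow> 0) (at t0 within {0..T})"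
    by (rule Lim_null_comparison[rotated])
qed

lemma continuous_on_l2s_norm:
  assumes "in_CT_l2s s T w"
  shows "continuous_on {0..T} (\<lambda>t. l2s_norm s (w t))"
  unfolding continuous_on_def
proof
  fix t0 assume t0: "t0 \<in> {0..T}"
  have "norm (l2s_norm s (w t) - l2s_norm s (w t0)) \<le> l2s_norm s (w t - w t0)" if "t \<in> {0..T}" for t
    using abs_l2s_norm_diff_le in_l2s_if_in_CT_l2s[OF assms] that t0 by simp
  then have "\<forall>\<^sub>F t in at t0 within {0..T}.
      norm (l2s_norm s (w t) - l2s_norm s (w t0)) \<le> l2s_norm s (w t - w t0)"
    unfolding eventually_at_filter by (auto intro: always_eventually)
  moreover have "((\<lambda>t. l2s_norm s (w t - w t0)) \<longlongrightarrow> 0) (at t0 within {0..T})"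
    using assms t0 by (simp add: in_CT_l2s_def)
  ultimately show "((\<lambda>t. l2s_norm s (w t)) \<longlongrightarrow> l2s_norm s (w t0)) (at t0 within {0..T})"
    by (rule LIM_zero_cancel[OF Lim_null_comparison])
qed

lemma l2s_norm_le_CT_norm:
  assumes "in_CT_l2s s T w" "t \<in> {0..T}"
  shows "l2s_norm s (w t) \<le> CT_norm s T w"
proof -
  have "bdd_above ((\<lambda>t. l2s_norm s (w t)) ` {0..T})"
    using compact_continuous_image[OF continuous_on_l2s_norm[OF assms(1)]]
    by (auto intro: bounded_imp_bdd_above compact_imp_bounded)
  then show ?thesis unfolding CT_norm_def using assms(2) by (rule cSUP_upper2) simp
qed

lemma CT_norm_le:
  assumes "T \<ge> 0" "\<And>t. t \<in> {0..T} \<Longrightarrow> l2s_norm s (w t) \<le> B"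
  shows "CT_norm s T w \<le> B"
  unfolding CT_norm_def using assms by (intro cSUP_least) auto

lemma CT_norm_NR_le:
  assumes "s \<ge> 0" "M \<ge> 0" "T \<ge> 0" "in_CT_l2s s T w"
  shows "CT_norm s T (NR M w) \<le> 27 * M * (CT_norm s T w)^3"
proof (rule CT_norm_le[OF assms(3)])
  fix t assume t: "t \<in> {0..T}"
  note wt = in_l2s_if_in_CT_l2s[OF assms(4) t]
  have "l2s_norm s (NR M w t) \<le> 18 * M * (l2s_norm s (w t))^3"
    using l2s_norm_NR3_le(2)[OF assms(1,2) wt wt wt]
    by (simp add: NR_eq_NR3 power3_eq_cube mult.assoc)
  also have "\<dots> \<le> 27 * M * (CT_norm s T w)^3"
    using assms(2) l2s_norm_le_CT_norm[OF assms(4) t] by (intro mult_mono power_mono) auto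
  finally show "l2s_norm s (NR M w t) \<le> 27 * M * (CT_norm s T w)^3" .
qed

lemma CT_norm_NR_diff_le:
  assumes "s \<ge> 0" "M \<ge> 0" "T \<ge> 0" "in_CT_l2s s T w" "in_CT_l2s s T w'"
  shows "CT_norm s T (\<lambda>t. NR M w t - NR M w' t)
    \<le> 27 * M * ((CT_norm s T w)^2 + (CT_norm s T w')^2) * CT_norm s T (\<lambda>t. w t - w' t)"
proof (rule CT_norm_le[OF assms(3)])
  fix t assume t: "t \<in> {0..T}"
  note CT = l2s_norm_le_CT_norm[OF _ t]
  have "l2s_norm s (NR M w t - NR M w' t)
      \<le> 27 * M * ((l2s_norm s (w t))^2 + (l2s_norm s (w' t))^2) * l2s_norm s (w t - w' t)"
    unfolding NR_eq_NR3 using assms(4,5) t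
    by (intro l2s_norm_NR3_diff_le assms(1,2) in_l2s_if_in_CT_l2s)
  also have "\<dots> \<le> 27 * M * ((CT_norm s T w)^2 + (CT_norm s T w')^2) * CT_norm s T (\<lambda>t. w t - w' t)"
    using assms(2) CT[OF assms(4)] CT[OF assms(5)] CT[OF in_CT_l2s_diff[OF assms(4,5)]]
    by (intro mult_mono mult_left_mono add_mono power_mono) auto
  finally show "l2s_norm s (NR M w t - NR M w' t)
      \<le> 27 * M * ((CT_norm s T w)^2 + (CT_norm s T w')^2) * CT_norm s T (\<lambda>t. w t - w' t)" .
qed

theorem lemma3p2:
  fixes s :: real
  assumes "s \<ge> 0"
  shows "\<exists>C::real. \<forall>M T w w'. M > 0 \<longrightarrow> T > 0 \<longrightarrow> in_CT_l2s s T w \<longrightarrow> in_CT_l2s s T w' \<longrightarrow>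
     CT_norm s T (NR M w) \<le> C * M * (CT_norm s T w)^3 \<and>
     CT_norm s T (\<lambda>t. NR M w t - NR M w' t)
       \<le> C * M * ((CT_norm s T w)^2 + (CT_norm s T w')^2) * CT_norm s T (\<lambda>t. w t - w' t)"
  using CT_norm_NR_le[OF assms] CT_norm_NR_diff_le[OF assms] by (intro exI[of _ 27]) auto

end
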